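(* In the setting described in the context, the discrete Lagrange multiplier $\sigma_h\in V_{nc}$ satisfies $$\sigma_h(z)\le 0\quad\text{for all } z\in\mathcal{M}_h^i,\qquad \sigma_h(z)=0\quad\text{for all } z\in\mathcal{M}_h^i \text{ with } u_h(z)>\chi(z).$$
   Context: $\Omega\subset\mathbb{R}^d$ ($1\le d\le3$) is a bounded polyhedral domain, $f\in L^2(\Omega)$, and the obstacle $\chi\in C(\bar\Omega)\cap H^1(\Omega)$ satisfies $\chi\le 0$ on $\partial\Omega$. $\mathcal{T}_h$ is a conforming shape-regular triangulation of $\Omega$ into closed triangles; $|T|$ is the area of $T$; $\mathcal{M}_h$ is the set of all edge midpoints, $\mathcal{M}_h^i$ the set of midpoints of interior edges, $\mathcal{V}_h^i$ the set of interior vertices, $\mathcal{M}_T$ the set of the three edge midpoints of $T$. $V_h=\{v\in H^1_0(\Omega): v|_T\in\mathbb{P}_2(T)\ \forall T\}$ with nodal basis $\{\psi_z: z\in\mathcal{V}_h^i\cup\mathcal{M}_h^i\}$. $V_{nc}$ is the Crouzeix–Raviart space (piecewise affine functions continuous at interior edge midpoints and vanishing at boundary edge midpoints). For $v\in V_{nc}$, $\Pi_hv:=\sum_{z\in\mathcal{M}_h^i}v(z)\psi_z\in V_h$. Let $a(v,w)=(\nabla v,\nabla w)$ (with $(\cdot,\cdot)$ the $L^2(\Omega)$ inner product). Let $\mathcal{K}_h=\{v_h\in V_h: v_h(z)\ge\chi(z)\ \forall z\in\mathcal{M}_h\}$ and let $u_h\in\mathcal{K}_h$ be the unique solution of $a(u_h,v_h-u_h)\ge(f,v_h-u_h)$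 for all $v_h\in\mathcal{K}_h$. Define the inner product on $V_{nc}$ by $\langle w,v\rangle_h=\sum_{T\in\mathcal{T}_h}\frac{|T|}{3}\sum_{z\in\mathcal{M}_T}w(z)v(z)$, and let $\sigma_h\in V_{nc}$ be defined by $\langle\sigma_h,v_h\rangle_h=(f,\Pi_hv_h)-a(u_h,\Pi_hv_h)$ for all $v_h\in V_{nc}$. *)

theory Defs
  imports "HOL-Analysis.Analysis"
begin

type_synonym pt = "real^2"

text \<open>A triangle is represented by its set of three (affinely independent) vertices K;
  the closed triangle itself is convex hull K.\<close>

definition is_triangle :: "pt set \<Rightarrow> bool" where
  "is_triangle K \<longleftrightarrow> card K = 3 \<and> \<not> affine_dependent K"

definition conforming_triangulation :: "pt set set \<Rightarrow> pt set \<Rightarrow> bool" where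
  "conforming_triangulation Th Om \<longleftrightarrow>
     finite Th \<and> Th \<noteq> {} \<and> (\<forall>K\<in>Th. is_triangle K) \<and>
     (\<forall>K1\<in>Th. \<forall>K2\<in>Th. K1 \<noteq> K2 \<longrightarrow>
        convex hull K1 \<inter> convex hull K2 = convex hull (K1 \<inter> K2)) \<and>
     Om = interior (\<Union>K\<in>Th. convex hull K)"

text \<open>Edge midpoints of a triangle (M_T), all edge midpoints (M_h), interior ones (M_h^i),
  all vertices.\<close>

definition mids :: "pt set \<Rightarrow> pt set" where
  "mids K = {midpoint a b | a b. a \<in> K \<and> b \<in> K \<and> a \<noteq> b}"

definition all_mids :: "pt set set \<Rightarrow> pt set" where
  "all_mids Th = (\<Union>K\<in>Th. mids K)"

definition int_mids :: "pt set set \<Rightarrow> pt set \<Rightarrow> pt set" where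
  "int_mids Th Om = {z \<in> all_mids Th. z \<in> Om}"

definition all_verts :: "pt set set \<Rightarrow> pt set" where
  "all_verts Th = \<Union> Th"

definition is_P2_on :: "pt set \<Rightarrow> (pt \<Rightarrow> real) \<Rightarrow> bool" where
  "is_P2_on S v \<longleftrightarrow> (\<exists>c0 c1 c2 c11 c12 c22. \<forall>x\<in>S.
      v x = c0 + c1 * x$1 + c2 * x$2 + c11 * (x$1)^2 + c12 * (x$1 * x$2) + c22 * (x$2)^2)"

text \<open>V_h: continuous piecewise P2 functions vanishing on the boundary (extended by zero
  outside Omega); this is exactly the set of piecewise P2 functions in H^1_0(Omega).\<close>

definition Vh :: "pt set set \<Rightarrow> pt set \<Rightarrow> (pt \<Rightarrow> real) set" where
  "Vh Th Om = {v. continuous_on UNIV v \<and> (\<forall>x. x \<notin> Om \<longrightarrow> v x = 0) \<and>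
                  (\<forall>K\<in>Th. is_P2_on (convex hull K) v)}"

definition psi :: "pt set set \<Rightarrow> pt set \<Rightarrow> pt \<Rightarrow> (pt \<Rightarrow> real)" where
  "psi Th Om z = (THE p. p \<in> Vh Th Om \<and> p z = 1 \<and>
        (\<forall>y \<in> all_verts Th \<union> all_mids Th. y \<noteq> z \<longrightarrow> p y = 0))"

text \<open>Crouzeix-Raviart functions, represented elementwise: v K is the affine piece on the
  triangle K.\<close>

definition Vnc :: "pt set set \<Rightarrow> pt set \<Rightarrow> (pt set \<Rightarrow> pt \<Rightarrow> real) set" where
  "Vnc Th Om = {v. (\<forall>K\<in>Th. \<exists>a b. \<forall>x\<in>convex hull K. v K x = inner a x + b) \<and>
     (\<forall>K1\<in>Th. \<forall>K2\<in>Th. \<forall>z. z \<in> mids K1 \<and> z \<in> mids K2 \<longrightarrow> v K1 z = v K2 z) \<and>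
     (\<forall>K\<in>Th. \<forall>z\<in>mids K. z \<notin> Om \<longrightarrow> v K z = 0)}"

text \<open>Value of a CR function at an edge midpoint (well defined by continuity there).\<close>

definition ncval :: "pt set set \<Rightarrow> (pt set \<Rightarrow> pt \<Rightarrow> real) \<Rightarrow> pt \<Rightarrow> real" where
  "ncval Th v z = v (SOME K. K \<in> Th \<and> z \<in> mids K) z"

definition Pi_h :: "pt set set \<Rightarrow> pt set \<Rightarrow> (pt set \<Rightarrow> pt \<Rightarrow> real) \<Rightarrow> pt \<Rightarrow> real" where
  "Pi_h Th Om v = (\<lambda>x. \<Sum>z\<in>int_mids Th Om. ncval Th v z * psi Th Om z x)"

definition ip_h :: "pt set set \<Rightarrow> (pt set \<Rightarrow> pt \<Rightarrow> real) \<Rightarrow> (pt set \<Rightarrow> pt \<Rightarrow> real) \<Rightarrow> real" where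
  "ip_h Th w v = (\<Sum>K\<in>Th. measure lebesgue (convex hull K) / 3 * (\<Sum>z\<in>mids K. w K z * v K z))"

text \<open>grad v . grad w (classical gradient; defined a.e. for piecewise polynomials).\<close>

definition grad_inner :: "(pt \<Rightarrow> real) \<Rightarrow> (pt \<Rightarrow> real) \<Rightarrow> pt \<Rightarrow> real" where
  "grad_inner v w x = (\<Sum>b\<in>Basis. frechet_derivative v (at x) b * frechet_derivative w (at x) b)"

definition bilin_a :: "pt set \<Rightarrow> (pt \<Rightarrow> real) \<Rightarrow> (pt \<Rightarrow> real) \<Rightarrow> real" where
  "bilin_a Om v w = integral Om (grad_inner v w)"

definition L2ip :: "pt set \<Rightarrow> (pt \<Rightarrow> real) \<Rightarrow> (pt \<Rightarrow> real) \<Rightarrow> real" where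
  "L2ip Om f g = integral\<^sup>L (lebesgue_on Om) (\<lambda>x. f x * g x)"

definition in_L2 :: "pt set \<Rightarrow> (pt \<Rightarrow> real) \<Rightarrow> bool" where
  "in_L2 Om g \<longleftrightarrow> g \<in> borel_measurable (lebesgue_on Om) \<and>
                   integrable (lebesgue_on Om) (\<lambda>x. (g x)^2)"

definition test_fun :: "pt set \<Rightarrow> (pt \<Rightarrow> real) \<Rightarrow> bool" where
  "test_fun Om phi \<longleftrightarrow> (\<forall>x. phi differentiable (at x)) \<and>
     (\<forall>b\<in>Basis. continuous_on UNIV (\<lambda>x. frechet_derivative phi (at x) b)) \<and>
     compact (closure {x. phi x \<noteq> 0}) \<and> closure {x. phi x \<noteq> 0} \<subseteq> Om"

definition in_H1 :: "pt set \<Rightarrow> (pt \<Rightarrow> real) \<Rightarrow> bool" where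
  "in_H1 Om g \<longleftrightarrow> in_L2 Om g \<and>
     (\<forall>b\<in>Basis. \<exists>gb. in_L2 Om gb \<and>
        (\<forall>phi. test_fun Om phi \<longrightarrow>
           integral\<^sup>L (lebesgue_on Om) (\<lambda>x. g x * frechet_derivative phi (at x) b)
           = - integral\<^sup>L (lebesgue_on Om) (\<lambda>x. gb x * phi x)))"

definition Kh :: "pt set set \<Rightarrow> pt set \<Rightarrow> (pt \<Rightarrow> real) \<Rightarrow> (pt \<Rightarrow> real) set" where
  "Kh Th Om chi = {v \<in> Vh Th Om. \<forall>z\<in>all_mids Th. v z \<ge> chi z}"

end

theory Submission
  imports Defs
begin

text \<open>
  Let z = midpoint a b be an interior edge midpoint. Its quadratic nodal basis function is the
  edge bubble psi_z = 4 lambda_a lambda_b, and the Crouzeix-Raviart basis function phi_z of z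
  satisfies Pi_h phi_z = psi_z. Testing the definition of sigma_h with phi_z therefore gives
  sigma_h(z) w_z = (f, psi_z) - a(u_h, psi_z), where w_z > 0 is the sum of |T|/3 over the
  triangles T having z as an edge midpoint. Since psi_z vanishes at every node other than z,
  u_h + t psi_z lies in K_h whenever u_h(z) + t \<ge> chi(z): t = 1 gives sigma_h(z) \<le> 0, and if
  u_h(z) > chi(z) a small negative t gives the reverse inequality.

  The geometric work is to show that psi_z, extended by zero, belongs to V_h: its support is
  the union of the two triangles sharing the edge, which lies in Omega because z is interior.
\<close>

section \<open>Barycentric coordinates\<close>

definition det2 :: "pt \<Rightarrow> pt \<Rightarrow> real" where
  "det2 u v = u$1 * v$2 - u$2 * v$1"

definition bary :: "pt \<Rightarrow> pt \<Rightarrow> pt \<Rightarrow> pt \<Rightarrow> real" where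
  "bary a b c x = det2 (b - x) (c - x) / det2 (b - a) (c - a)"

definition affine_fun :: "(pt \<Rightarrow> real) \<Rightarrow> bool" where
  "affine_fun f \<longleftrightarrow> (\<exists>w \<beta>. \<forall>x. f x = inner w x + \<beta>)"

lemma inner_vec2: "inner (u::pt) v = u$1 * v$1 + u$2 * v$2"
  by (simp add: inner_vec_def sum_2)

lemma affine_fun_const: "affine_fun (\<lambda>x. c)"
  unfolding affine_fun_def by (rule exI[of _ 0]) simp

lemma affine_fun_bary: "affine_fun (bary a b c)"
proof -
  define D where "D = det2 (b - a) (c - a)"
  have "det2 (b - x) (c - x) = (b$1*c$2 - b$2*c$1) + ((b$2 - c$2) * x$1 + (c$1 - b$1) * x$2)" for x
    by (simp add: det2_def algebra_simps)
  then have "bary a b c x = inner (vector [(b$2 - c$2) / D, (c$1 - b$1) / D]) x + (b$1*c$2 - b$2*c$1) / D"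
    for x
    unfolding bary_def D_def[symmetric] by (simp add: inner_vec2 add_divide_distrib)
  then show ?thesis
    unfolding affine_fun_def by blast
qed

lemma continuous_on_affine_fun: "affine_fun f \<Longrightarrow> continuous_on A f"
  unfolding affine_fun_def by (auto intro!: continuous_intros)

lemma differentiable_affine_fun: "affine_fun f \<Longrightarrow> f differentiable (at x)"
proof -
  assume "affine_fun f"
  then obtain w \<beta> where "f = (\<lambda>x. inner w x + \<beta>)"
    unfolding affine_fun_def by blast
  then show ?thesis
    by simp
qed

lemma open_affine_fun_pos: "affine_fun f \<Longrightarrow> open {x. f x > 0}"
  by (simp add: continuous_on_affine_fun open_Collect_less continuous_on_const)

lemma affine_fun_convex_comb:
  assumes "affine_fun f" "finite S" "sum u S = 1"
  shows "f (\<Sum>s\<in>S. u s *\<^sub>R s) = (\<Sum>s\<in>S. u s * f s)"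
proof -
  obtain w \<beta> where f: "\<And>x. f x = inner w x + \<beta>"
    using assms(1) unfolding affine_fun_def by blast
  have "(\<Sum>s\<in>S. u s * f s) = (\<Sum>s\<in>S. u s * inner w s) + (\<Sum>s\<in>S. u s) * \<beta>"
    by (simp add: f distrib_left sum.distrib sum_distrib_right)
  then show ?thesis
    using assms(3) by (simp add: f inner_sum_right)
qed

lemma affine_fun_midpoint: "affine_fun f \<Longrightarrow> f (midpoint p q) = (f p + f q) / 2"
  unfolding affine_fun_def midpoint_def by (auto simp: inner_add_right field_simps)

lemma affine_fun_line: "affine_fun f \<Longrightarrow> f (x + t *\<^sub>R (y - x)) = f x + t * (f y - f x)"
  unfolding affine_fun_def by (auto simp: algebra_simps)

lemma det2_rotate:
  "det2 (c - b) (a - b) = det2 (b - a) (c - a)"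
  "det2 (a - c) (b - c) = det2 (b - a) (c - a)"
  by (simp_all add: det2_def algebra_simps)

lemma det2_nonzero_imp_distinct: "det2 (b - a) (c - a) \<noteq> 0 \<Longrightarrow> a \<noteq> b \<and> a \<noteq> c \<and> b \<noteq> c"
  by (auto simp: det2_def)

lemma bary_swap: "bary a b c = bary a c b"
  unfolding bary_def det2_def by (rule ext) (simp add: divide_simps algebra_simps)

lemma bary_vertices:
  assumes "det2 (b - a) (c - a) \<noteq> 0"
  shows "bary a b c a = 1" "bary a b c b = 0" "bary a b c c = 0"
  using assms by (simp_all add: bary_def det2_def)

lemma bary_sum:
  assumes "det2 (b - a) (c - a) \<noteq> 0"
  shows "bary a b c x + bary b c a x + bary c a b x = 1"
proof -
  have "det2 (b - x) (c - x) + det2 (c - x) (a - x) + det2 (a - x) (b - x) = det2 (b - a) (c - a)"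
    by (simp add: det2_def algebra_simps)
  then show ?thesis
    using assms unfolding bary_def det2_rotate by (simp add: add_divide_distrib[symmetric])
qed

lemma bary_affine_comb:
  assumes "det2 (b - a) (c - a) \<noteq> 0"
  shows "x = bary a b c x *\<^sub>R a + bary b c a x *\<^sub>R b + bary c a b x *\<^sub>R c"
proof -
  have "det2 (b - a) (c - a) *\<^sub>R x =
      det2 (b - x) (c - x) *\<^sub>R a + det2 (c - x) (a - x) *\<^sub>R b + det2 (a - x) (b - x) *\<^sub>R c"
    unfolding det2_def vec_eq_iff forall_2 by (simp add: algebra_simps)
  then have "x = (1 / det2 (b - a) (c - a)) *\<^sub>R (det2 (b - x) (c - x) *\<^sub>R a
      + det2 (c - x) (a - x) *\<^sub>R b + det2 (a - x) (b - x) *\<^sub>R c)"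
    using assms by (metis scaleR_one scaleR_scaleR nonzero_divide_eq_eq)
  then show ?thesis
    unfolding bary_def det2_rotate scaleR_add_right scaleR_scaleR
    by (simp only: times_divide_eq_left mult_1_left)
qed

lemma det2_eq_0_imp_parallel:
  assumes "det2 u v = 0"
  shows "u = 0 \<or> v = 0 \<or> (\<exists>k. v = k *\<^sub>R u)"
proof (cases "u$1 = 0")
  case True
  then have "u = 0 \<or> v = (v$2 / u$2) *\<^sub>R u"
    using assms by (auto simp: det2_def vec_eq_iff forall_2)
  then show ?thesis by blast
next
  case False
  then have "v = (v$1 / u$1) *\<^sub>R u"
    using assms by (auto simp: det2_def vec_eq_iff forall_2 field_simps)
  then show ?thesis by blast
qed

lemma triangle_vertices:
  assumes "is_triangle K"
  obtains a b c where "K = {a, b, c}" "det2 (b - a) (c - a) \<noteq> 0"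
proof -
  from assms obtain a b c where K: "K = {a, b, c}" "a \<noteq> b" "b \<noteq> c" "a \<noteq> c"
    unfolding is_triangle_def card_3_iff by blast
  have "\<not> collinear {b, a, c}"
    using assms K collinear_3_eq_affine_dependent unfolding is_triangle_def
    by (metis insert_commute)
  moreover have "collinear {b, a, c} \<longleftrightarrow> collinear {0, b - a, c - a}"
    by (simp add: collinear_3)
  ultimately have "det2 (b - a) (c - a) \<noteq> 0"
    using det2_eq_0_imp_parallel[of "b - a" "c - a"] unfolding collinear_lemma by blast
  then show ?thesis
    using that K by blast
qed

lemma finite_triangle: "is_triangle K \<Longrightarrow> finite K"
  unfolding is_triangle_def by (metis card.infinite zero_neq_numeral)

text \<open>The barycentric coordinate of the vertex p of the triangle K, and 0 if p is not a
  vertex; the choice only orders the two other vertices, on which bary does not depend.\<close>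

definition bary_coord :: "pt set \<Rightarrow> pt \<Rightarrow> pt \<Rightarrow> real" where
  "bary_coord K p = (if p \<in> K
     then (SOME f. \<exists>q r. K = {p, q, r} \<and> p \<noteq> q \<and> p \<noteq> r \<and> q \<noteq> r \<and> f = bary p q r)
     else (\<lambda>_. 0))"

lemma bary_coord_eq:
  assumes "K = {p, q, r}" "p \<noteq> q" "p \<noteq> r" "q \<noteq> r"
  shows "bary_coord K p = bary p q r"
proof -
  have "\<exists>f q r. K = {p, q, r} \<and> p \<noteq> q \<and> p \<noteq> r \<and> q \<noteq> r \<and> f = bary p q r"
    using assms by blast
  from someI_ex[OF this] obtain q' r' where
    "K = {p, q', r'}" "p \<noteq> q'" "p \<noteq> r'" "q' \<noteq> r'"
    "(SOME f. \<exists>q r. K = {p, q, r} \<and> p \<noteq> q \<and> p \<noteq> r \<and> q \<noteq> r \<and> f = bary p q r) = bary p q' r'"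
    by blast
  moreover from this have "(q' = q \<and> r' = r) \<or> (q' = r \<and> r' = q)"
    using assms by (auto simp: insert_commute insert_eq_iff doubleton_eq_iff)
  ultimately show ?thesis
    using assms by (auto simp: bary_coord_def bary_swap)
qed

lemma bary_coord_outside: "p \<notin> K \<Longrightarrow> bary_coord K p x = 0"
  by (simp add: bary_coord_def)

lemma bary_coord_vertices:
  assumes "K = {a, b, c}" "det2 (b - a) (c - a) \<noteq> 0"
  shows "bary_coord K a = bary a b c" "bary_coord K b = bary b c a" "bary_coord K c = bary c a b"
  using assms det2_nonzero_imp_distinct[OF assms(2)]
  by (auto intro!: bary_coord_eq simp: insert_commute)

lemma affine_fun_bary_coord: "is_triangle K \<Longrightarrow> affine_fun (bary_coord K p)"
proof -
  assume "is_triangle K"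
  then obtain a b c where K: "K = {a, b, c}" "det2 (b - a) (c - a) \<noteq> 0"
    by (rule triangle_vertices)
  show ?thesis
  proof (cases "p \<in> K")
    case True
    then show ?thesis
      using K bary_coord_vertices[OF K] affine_fun_bary by auto
  qed (simp add: bary_coord_def affine_fun_const)
qed

lemma bary_coord_vertex:
  assumes "is_triangle K" "q \<in> K"
  shows "bary_coord K p q = (if p = q then 1 else 0)"
proof -
  obtain a b c where K: "K = {a, b, c}" and D: "det2 (b - a) (c - a) \<noteq> 0"
    using assms(1) by (rule triangle_vertices)
  have D': "det2 (c - b) (a - b) \<noteq> 0" "det2 (a - c) (b - c) \<noteq> 0"
    using D det2_rotate by simp_all
  have "p \<in> K \<Longrightarrow> ?thesis"
    using assms(2) K det2_nonzero_imp_distinct[OF D] bary_coord_vertices[OF K D]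
      bary_vertices[OF D] bary_vertices[OF D'(1)] bary_vertices[OF D'(2)]
    by auto
  then show ?thesis
    using assms(2) by (cases "p \<in> K") (auto simp: bary_coord_outside)
qed

lemma bary_coord_sum:
  assumes "is_triangle K"
  shows "(\<Sum>p\<in>K. bary_coord K p x) = 1" "x = (\<Sum>p\<in>K. bary_coord K p x *\<^sub>R p)"
proof -
  obtain a b c where K: "K = {a, b, c}" and D: "det2 (b - a) (c - a) \<noteq> 0"
    using assms(1) by (rule triangle_vertices)
  then show "(\<Sum>p\<in>K. bary_coord K p x) = 1" "x = (\<Sum>p\<in>K. bary_coord K p x *\<^sub>R p)"
    using det2_nonzero_imp_distinct[OF D] bary_coord_vertices[OF K D]
      bary_sum[OF D, of x] bary_affine_comb[OF D, of x]
    by (simp_all add: algebra_simps)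
qed

lemma bary_coord_param:
  assumes K: "is_triangle K" "K = {a, b, c}" and "a \<noteq> b" "a \<noteq> c" "b \<noteq> c"
  shows "x = a + bary_coord K b x *\<^sub>R (b - a) + bary_coord K c x *\<^sub>R (c - a)"
proof -
  have sum3: "(\<Sum>p\<in>K. f p) = f a + f b + f c" for f :: "pt \<Rightarrow> 'v::comm_monoid_add"
    using assms(2-) by (simp add: add.assoc)
  have coord_a: "bary_coord K a x = 1 - bary_coord K b x - bary_coord K c x"
    using bary_coord_sum(1)[OF K(1), of x] unfolding sum3 by linarith
  show ?thesis
    using bary_coord_sum(2)[OF K(1), of x] unfolding sum3 coord_a by (simp add: algebra_simps)
qed

lemma bary_coord_convex_comb:
  assumes "is_triangle K" "S \<subseteq> K" "sum \<nu> S = 1" "x = (\<Sum>s\<in>S. \<nu> s *\<^sub>R s)"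
  shows "bary_coord K p x = (if p \<in> S then \<nu> p else 0)"
proof -
  have fS: "finite S"
    using assms(2) finite_triangle[OF assms(1)] finite_subset by blast
  have "bary_coord K p x = (\<Sum>s\<in>S. \<nu> s * bary_coord K p s)"
    using affine_fun_convex_comb[OF affine_fun_bary_coord[OF assms(1)] fS assms(3)] assms(4)
    by simp
  also have "\<dots> = (\<Sum>s\<in>S. \<nu> s * (if p = s then 1 else 0))"
    using assms(2) bary_coord_vertex[OF assms(1)] by (intro sum.cong) auto
  also have "\<dots> = (if p \<in> S then \<nu> p else 0)"
    using fS by (simp add: if_distrib cong: if_cong)
  finally show ?thesis .
qed

lemma mem_convex_hull_triangle:
  assumes "is_triangle K"
  shows "x \<in> convex hull K \<longleftrightarrow> (\<forall>p\<in>K. bary_coord K p x \<ge> 0)"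
proof -
  have fK: "finite K"
    using finite_triangle[OF assms] .
  show ?thesis
  proof
    assume "x \<in> convex hull K"
    then obtain \<nu> where "\<forall>s\<in>K. 0 \<le> \<nu> s" "sum \<nu> K = 1" "x = (\<Sum>s\<in>K. \<nu> s *\<^sub>R s)"
      unfolding convex_hull_finite[OF fK] by auto
    then show "\<forall>p\<in>K. bary_coord K p x \<ge> 0"
      using bary_coord_convex_comb[OF assms order_refl] by simp
  next
    assume "\<forall>p\<in>K. bary_coord K p x \<ge> 0"
    then show "x \<in> convex hull K"
      unfolding convex_hull_finite[OF fK] using bary_coord_sum[OF assms, of x] by force
  qed
qed

lemma interior_convex_hull_triangle:
  assumes "is_triangle K"
  shows "x \<in> interior (convex hull K) \<longleftrightarrow> (\<forall>p\<in>K. bary_coord K p x > 0)"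
proof -
  have "interior (convex hull K) = {y. \<exists>u. (\<forall>x\<in>K. 0 < u x) \<and> sum u K = 1 \<and> (\<Sum>x\<in>K. u x *\<^sub>R x) = y}"
    using assms interior_convex_hull_explicit_minimal[of K] unfolding is_triangle_def by simp
  then show ?thesis
    using bary_coord_convex_comb[OF assms order_refl] bary_coord_sum[OF assms, of x]
    by auto
qed

lemma measure_triangle_pos:
  assumes "is_triangle K"
  shows "measure lebesgue (convex hull K) > 0"
proof -
  have "interior (convex hull K) \<noteq> {}"
    using assms interior_convex_hull_eq_empty[of K] unfolding is_triangle_def by simp
  then have "\<not> negligible (convex hull K)"
    using negligible_convex_interior by blast
  moreover have "convex hull K \<in> lmeasurable"
    using finite_triangle[OF assms] by (intro lmeasurable_compact finite_imp_compact_convex_hull)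
  ultimately show ?thesis
    using negligible_iff_measure0 by (metis measure_nonneg order_le_less)
qed

lemma bary_coord_midpoint:
  assumes "is_triangle K" "p \<in> K" "q \<in> K"
  shows "bary_coord K r (midpoint p q) = ((if r = p then 1 else 0) + (if r = q then 1 else 0)) / 2"
  using affine_fun_midpoint[OF affine_fun_bary_coord[OF assms(1)], of r p q]
    bary_coord_vertex[OF assms(1)] assms(2,3)
  by (auto simp: eq_commute[of r])

lemma midpoint_in_convex_hull_triangle:
  assumes "is_triangle K" "p \<in> K" "q \<in> K"
  shows "midpoint p q \<in> convex hull K"
  using assms by (simp add: mem_convex_hull_triangle bary_coord_midpoint)

lemma triangle_third_vertex:
  assumes "is_triangle K" "a \<in> K" "b \<in> K" "a \<noteq> b"
  obtains c where "K = {a, b, c}" "c \<noteq> a" "c \<noteq> b"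
proof -
  obtain x y w where "K = {x, y, w}" "det2 (y - x) (w - x) \<noteq> 0"
    using assms(1) by (rule triangle_vertices)
  with det2_nonzero_imp_distinct show ?thesis
    using that assms(2-4) by (auto simp: insert_commute)
qed

lemma affine_fun_vanishing_on_edge:
  assumes "is_triangle K" "K = {a, b, c}" "c \<noteq> a" "c \<noteq> b" "a \<noteq> b"
    and "affine_fun f" "f a = 0" "f b = 0"
  shows "f y = bary_coord K c y * f c"
proof -
  have "f y = f (\<Sum>p\<in>K. bary_coord K p y *\<^sub>R p)"
    using bary_coord_sum(2)[OF assms(1), of y] by simp
  also have "\<dots> = (\<Sum>p\<in>K. bary_coord K p y * f p)"
    by (rule affine_fun_convex_comb[OF assms(6) finite_triangle[OF assms(1)] bary_coord_sum(1)[OF assms(1)]])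
  also have "\<dots> = bary_coord K c y * f c"
    using assms(2-5,7,8) by simp
  finally show ?thesis .
qed

section \<open>Quadratic Lagrange elements\<close>

lemma is_P2_on_cong: "is_P2_on S f \<Longrightarrow> (\<And>x. x \<in> S \<Longrightarrow> g x = f x) \<Longrightarrow> is_P2_on S g"
  unfolding is_P2_on_def by metis

lemma is_P2_on_affine_prod:
  assumes "affine_fun f" "affine_fun g"
  shows "is_P2_on S (\<lambda>x. k * f x * g x)"
proof -
  obtain w \<beta> where f: "\<And>x. f x = inner w x + \<beta>"
    using assms(1) unfolding affine_fun_def by blast
  obtain v \<gamma> where g: "\<And>x. g x = inner v x + \<gamma>"
    using assms(2) unfolding affine_fun_def by blast
  show ?thesis
    unfolding is_P2_on_def f g inner_vec2
    by (rule exI[of _ "k * \<beta> * \<gamma>"], rule exI[of _ "k * (w$1 * \<gamma> + v$1 * \<beta>)"],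
        rule exI[of _ "k * (w$2 * \<gamma> + v$2 * \<beta>)"], rule exI[of _ "k * w$1 * v$1"],
        rule exI[of _ "k * (w$1 * v$2 + w$2 * v$1)"], rule exI[of _ "k * w$2 * v$2"])
       (simp add: algebra_simps power2_eq_square)
qed

lemma is_P2_on_add_scaled:
  assumes "is_P2_on S f" "is_P2_on S g"
  shows "is_P2_on S (\<lambda>x. f x + t * g x)"
proof -
  obtain a0 a1 a2 a11 a12 a22 where f:
    "\<forall>x\<in>S. f x = a0 + a1 * x$1 + a2 * x$2 + a11 * (x$1)^2 + a12 * (x$1 * x$2) + a22 * (x$2)^2"
    using assms(1) unfolding is_P2_on_def by blast
  obtain b0 b1 b2 b11 b12 b22 where g:
    "\<forall>x\<in>S. g x = b0 + b1 * x$1 + b2 * x$2 + b11 * (x$1)^2 + b12 * (x$1 * x$2) + b22 * (x$2)^2"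
    using assms(2) unfolding is_P2_on_def by blast
  show ?thesis
    unfolding is_P2_on_def
    by (rule exI[of _ "a0 + t*b0"], rule exI[of _ "a1 + t*b1"], rule exI[of _ "a2 + t*b2"],
        rule exI[of _ "a11 + t*b11"], rule exI[of _ "a12 + t*b12"], rule exI[of _ "a22 + t*b22"])
      (use f g in \<open>simp add: algebra_simps\<close>)
qed

lemma is_P2_on_affine_comp:
  assumes q: "is_P2_on T q" and A: "\<And>y. y \<in> S \<Longrightarrow> A y \<in> T" "\<And>i. affine_fun (\<lambda>y. A y $ i)"
  shows "is_P2_on S (\<lambda>y. q (A y))"
proof -
  obtain k0 k1 k2 k11 k12 k22 where k:
    "\<forall>x\<in>T. q x = k0 + k1 * x$1 + k2 * x$2 + k11 * (x$1)^2 + k12 * (x$1 * x$2) + k22 * (x$2)^2"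
    using q unfolding is_P2_on_def by blast
  let ?X = "\<lambda>i y. A y $ i"
  have monomial: "is_P2_on S (\<lambda>y. k * f y * g y)"
    if "f \<in> {\<lambda>_. 1, ?X 1, ?X 2}" "g \<in> {\<lambda>_. 1, ?X 1, ?X 2}" for k f g
    using that A(2) affine_fun_const by (intro is_P2_on_affine_prod) auto
  have "is_P2_on S (\<lambda>y. k0 * 1 * 1 + 1 * (k1 * ?X 1 y * 1 + 1 * (k2 * ?X 2 y * 1
      + 1 * (k11 * ?X 1 y * ?X 1 y + 1 * (k12 * ?X 1 y * ?X 2 y + 1 * (k22 * ?X 2 y * ?X 2 y))))))"
    by (intro is_P2_on_add_scaled; rule monomial; simp)
  then show ?thesis
    by (rule is_P2_on_cong) (use k A(1) in \<open>simp add: power2_eq_square\<close>)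
qed

lemma quadratic_vanishing_at_nodes:
  fixes Q :: "real \<Rightarrow> real \<Rightarrow> real"
  assumes Q: "\<And>s t. Q s t = d0 + d1 * s + d2 * t + d11 * s^2 + d12 * (s * t) + d22 * t^2"
    and "Q 0 0 = 0" "Q 1 0 = 0" "Q 0 1 = 0" "Q (1/2) 0 = 0" "Q 0 (1/2) = 0" "Q (1/2) (1/2) = 0"
  shows "Q s t = 0"
proof -
  have "d0 = 0" "d1 = 0" "d2 = 0" "d11 = 0" "d22 = 0" "d12 = 0"
    using assms(2-) unfolding Q by (simp_all add: power2_eq_square)
  then show ?thesis
    unfolding Q by simp
qed

text \<open>Pulled back along y \<mapsto> a + y$1 (b - a) + y$2 (c - a), the quadratic vanishes at the six
  nodes of the reference triangle, which forces all six of its coefficients to be zero.\<close>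

lemma P2_unisolvent:
  assumes K: "is_triangle K" and q: "is_P2_on (convex hull K) q"
    and nodes: "\<And>p p'. p \<in> K \<Longrightarrow> p' \<in> K \<Longrightarrow> q (midpoint p p') = 0"
    and x: "x \<in> convex hull K"
  shows "q x = 0"
proof -
  obtain a b c where abc: "K = {a, b, c}" and D: "det2 (b - a) (c - a) \<noteq> 0"
    using K by (rule triangle_vertices)
  have mem: "a \<in> K" "b \<in> K" "c \<in> K"
    using abc by auto
  define A where "A y = a + y$1 *\<^sub>R (b - a) + y$2 *\<^sub>R (c - a)" for y :: pt
  have affA: "affine_fun (\<lambda>y. A y $ i)" for i
    unfolding affine_fun_def A_def inner_vec2
    by (rule exI[of _ "vector [(b - a)$i, (c - a)$i]"], rule exI[of _ "a$i"]) (simp add: algebra_simps)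
  have "is_P2_on {y. A y \<in> convex hull K} (\<lambda>y. q (A y))"
    by (rule is_P2_on_affine_comp[OF q _ affA]) simp
  then obtain d0 d1 d2 d11 d12 d22 where d: "\<forall>y\<in>{y. A y \<in> convex hull K}.
      q (A y) = d0 + d1 * y$1 + d2 * y$2 + d11 * (y$1)^2 + d12 * (y$1 * y$2) + d22 * (y$2)^2"
    unfolding is_P2_on_def by blast
  define Q where "Q s t = d0 + d1 * s + d2 * t + d11 * s^2 + d12 * (s * t) + d22 * t^2" for s t
  have qA: "q (A y) = Q (y$1) (y$2)" if "A y \<in> convex hull K" for y
    using d that unfolding Q_def by blast
  have node: "Q s t = 0" if "A (vector [s, t]) = midpoint p p'" "p \<in> K" "p' \<in> K" for s t p p'
    using qA[of "vector [s, t]"] that nodes midpoint_in_convex_hull_triangle[OF K] by simp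
  have vertex_nodes: "A (vector [0, 0]) = midpoint a a" "A (vector [1, 0]) = midpoint b b"
    "A (vector [0, 1]) = midpoint c c"
    by (simp_all add: A_def)
  have edge_nodes: "A (vector [1/2, 0]) = midpoint a b" "A (vector [0, 1/2]) = midpoint a c"
    "A (vector [1/2, 1/2]) = midpoint b c"
    by (simp_all add: A_def midpoint_def vec_eq_iff forall_2 field_simps)
  have zero: "Q s t = 0" for s t
    by (rule quadratic_vanishing_at_nodes[OF Q_def node[OF vertex_nodes(1) mem(1,1)]
          node[OF vertex_nodes(2) mem(2,2)] node[OF vertex_nodes(3) mem(3,3)]
          node[OF edge_nodes(1) mem(1,2)] node[OF edge_nodes(2) mem(1,3)]
          node[OF edge_nodes(3) mem(2,3)]])
  have "x = a + bary_coord K b x *\<^sub>R (b - a) + bary_coord K c x *\<^sub>R (c - a)"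
    using bary_coord_param[OF K abc] det2_nonzero_imp_distinct[OF D] by blast
  moreover define v :: pt where "v = vector [bary_coord K b x, bary_coord K c x]"
  ultimately have xA: "x = A v"
    unfolding A_def by simp
  show ?thesis
    using qA[of v] zero x unfolding xA by simp
qed

section \<open>Triangulations\<close>

locale triangulation =
  fixes Th :: "pt set set" and Om :: "pt set"
  assumes conforming: "conforming_triangulation Th Om"
begin

lemma finite_Th: "finite Th"
  using conforming unfolding conforming_triangulation_def by blast

lemma triangle: "K \<in> Th \<Longrightarrow> is_triangle K"
  using conforming unfolding conforming_triangulation_def by auto

lemma hull_inter_hull:
  "K1 \<in> Th \<Longrightarrow> K2 \<in> Th \<Longrightarrow> K1 \<noteq> K2 \<Longrightarrow> convex hull K1 \<inter> convex hull K2 = convex hull (K1 \<inter> K2)"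
  using conforming unfolding conforming_triangulation_def by blast

lemma Om_eq: "Om = interior (\<Union>K\<in>Th. convex hull K)"
  using conforming unfolding conforming_triangulation_def by blast

lemma open_Om: "open Om"
  using Om_eq by simp

lemma Om_covered: "x \<in> Om \<Longrightarrow> \<exists>K\<in>Th. x \<in> convex hull K"
  unfolding Om_eq using interior_subset by blast

lemma closed_convex_hull: "K \<in> Th \<Longrightarrow> closed (convex hull K)"
  using triangle finite_triangle by (simp add: compact_imp_closed finite_imp_compact_convex_hull)

lemma bary_coord_consistent:
  assumes "K1 \<in> Th" "K2 \<in> Th" "x \<in> convex hull K1" "x \<in> convex hull K2"
  shows "bary_coord K1 p x = bary_coord K2 p x"
proof (cases "K1 = K2")
  case False
  have "finite (K1 \<inter> K2)"
    using finite_triangle[OF triangle[OF assms(1)]] by blast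
  moreover have "x \<in> convex hull (K1 \<inter> K2)"
    using hull_inter_hull[OF assms(1,2) False] assms(3,4) by blast
  ultimately obtain \<nu> where "sum \<nu> (K1 \<inter> K2) = 1" "(\<Sum>s\<in>K1 \<inter> K2. \<nu> s *\<^sub>R s) = x"
    by (auto simp: convex_hull_finite)
  then show ?thesis
    using bary_coord_convex_comb[OF triangle[OF assms(1)], of "K1 \<inter> K2" \<nu> x p]
      bary_coord_convex_comb[OF triangle[OF assms(2)], of "K1 \<inter> K2" \<nu> x p]
    by auto
qed simp

lemma finite_mids: "K \<in> Th \<Longrightarrow> finite (mids K)"
proof -
  assume "K \<in> Th"
  then have "finite ((\<lambda>(p, q). midpoint p q) ` (K \<times> K))"
    using finite_triangle triangle by blast
  moreover have "mids K \<subseteq> (\<lambda>(p, q). midpoint p q) ` (K \<times> K)"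
    unfolding mids_def by auto
  ultimately show ?thesis
    by (rule finite_subset[rotated])
qed

lemma finite_all_mids: "finite (all_mids Th)"
  unfolding all_mids_def using finite_Th finite_mids by blast

lemma Vh_eqI:
  assumes p1: "p1 \<in> Vh Th Om" and p2: "p2 \<in> Vh Th Om"
    and eq: "\<And>y. y \<in> all_verts Th \<union> all_mids Th \<Longrightarrow> p1 y = p2 y"
  shows "p1 = p2"
proof
  fix x
  show "p1 x = p2 x"
  proof (cases "x \<in> Om")
    case False
    then show ?thesis
      using p1 p2 unfolding Vh_def by auto
  next
    case True
    then obtain K where K: "K \<in> Th" "x \<in> convex hull K"
      using Om_covered by blast
    have "is_P2_on (convex hull K) p1" "is_P2_on (convex hull K) p2"
      using p1 p2 K(1) unfolding Vh_def by auto
    then have "is_P2_on (convex hull K) (\<lambda>x. p1 x + (-1) * p2 x)"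
      by (rule is_P2_on_add_scaled)
    moreover have "p1 (midpoint p p') + (-1) * p2 (midpoint p p') = 0" if "p \<in> K" "p' \<in> K" for p p'
    proof -
      have "midpoint p p' \<in> all_verts Th \<union> all_mids Th"
        using that K(1) unfolding all_verts_def all_mids_def mids_def
        by (cases "p = p'") auto
      then show ?thesis
        using eq by simp
    qed
    ultimately have "p1 x + (-1) * p2 x = 0"
      by (rule P2_unisolvent[OF triangle[OF K(1)] _ _ K(2)])
    then show ?thesis
      by simp
  qed
qed

definition hat :: "pt \<Rightarrow> pt \<Rightarrow> real" where
  "hat p x = (if \<exists>K\<in>Th. x \<in> convex hull K
     then bary_coord (SOME K. K \<in> Th \<and> x \<in> convex hull K) p x else 0)"

lemma hat_eq: "K \<in> Th \<Longrightarrow> x \<in> convex hull K \<Longrightarrow> hat p x = bary_coord K p x"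
  unfolding hat_def by (metis (mono_tags, lifting) bary_coord_consistent someI_ex)

lemma hat_uncovered: "\<forall>K\<in>Th. x \<notin> convex hull K \<Longrightarrow> hat p x = 0"
  unfolding hat_def by simp

lemma star_contains_ball:
  assumes "z \<in> Om"
  obtains r where "r > 0" "\<And>y. y \<in> ball z r \<Longrightarrow> \<exists>K\<in>Th. y \<in> convex hull K \<and> z \<in> convex hull K"
proof -
  define F where "F = (\<Union>K\<in>{K\<in>Th. z \<notin> convex hull K}. convex hull K)"
  have "closed F"
    unfolding F_def using finite_Th closed_convex_hull by (intro closed_UN) auto
  then have "open (Om - F)"
    using open_Om by (simp add: open_Diff)
  moreover have "z \<in> Om - F"
    using assms unfolding F_def by blast
  ultimately obtain r where r: "r > 0" "ball z r \<subseteq> Om - F"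
    using open_contains_ball by blast
  show ?thesis
  proof (rule that[OF r(1)])
    fix y
    assume "y \<in> ball z r"
    then have "y \<in> Om" "y \<notin> F"
      using r(2) by auto
    then show "\<exists>K\<in>Th. y \<in> convex hull K \<and> z \<in> convex hull K"
      using Om_covered unfolding F_def by blast
  qed
qed

definition skeleton :: "pt set" where
  "skeleton = (\<Union>K\<in>Th. frontier (convex hull K))"

lemma negligible_skeleton: "negligible skeleton"
  unfolding skeleton_def using finite_Th by (intro negligible_Union) (auto intro: negligible_convex_frontier)

lemma interior_off_skeleton:
  assumes "K \<in> Th" "x \<in> convex hull K" "x \<notin> skeleton"
  shows "x \<in> interior (convex hull K)"
  using assms closed_convex_hull[OF assms(1)] unfolding skeleton_def frontier_def
  by (auto simp: closure_closed)

lemma ncval_eq: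
  assumes v: "v \<in> Vnc Th Om" and K: "K \<in> Th" "w \<in> mids K"
  shows "ncval Th v w = v K w"
proof -
  have "\<exists>K. K \<in> Th \<and> w \<in> mids K"
    using K by blast
  then have "(SOME K. K \<in> Th \<and> w \<in> mids K) \<in> Th \<and> w \<in> mids (SOME K. K \<in> Th \<and> w \<in> mids K)"
    by (rule someI_ex)
  then show ?thesis
    using v K unfolding ncval_def Vnc_def by blast
qed

end

lemma L2ip_cmult: "L2ip Om f (\<lambda>x. t * g x) = t * L2ip Om f g"
proof -
  have "(\<lambda>x. f x * (t * g x)) = (\<lambda>x. t * (f x * g x))"
    by (simp add: algebra_simps)
  then show ?thesis
    unfolding L2ip_def by simp
qed

lemma bilin_a_cmult:
  assumes "negligible N" and diff: "\<And>x. x \<in> Om \<Longrightarrow> x \<notin> N \<Longrightarrow> g differentiable (at x)"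
  shows "bilin_a Om u (\<lambda>x. t * g x) = t * bilin_a Om u g"
proof -
  have "integral Om (grad_inner u (\<lambda>x. t * g x)) = integral Om (\<lambda>x. t * grad_inner u g x)"
  proof (rule integral_spike[OF assms(1)])
    fix x
    assume "x \<in> Om - N"
    then have "(g has_derivative frechet_derivative g (at x)) (at x)"
      using diff frechet_derivative_works by blast
    then have "((\<lambda>y. t * g y) has_derivative (\<lambda>h. t * frechet_derivative g (at x) h)) (at x)"
      using has_derivative_mult[OF has_derivative_const[of t]] by simp
    then have "frechet_derivative (\<lambda>y. t * g y) (at x) = (\<lambda>h. t * frechet_derivative g (at x) h)"
      by (rule frechet_derivative_at[symmetric])
    then show "t * grad_inner u g x = grad_inner u (\<lambda>x. t * g x) x"
      unfolding grad_inner_def by (simp add: sum_distrib_left algebra_simps)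
  qed
  then show ?thesis
    unfolding bilin_a_def by simp
qed

section \<open>The basis functions of an interior edge midpoint\<close>

locale interior_edge = triangulation +
  fixes a b z :: pt and K0 :: "pt set"
  assumes K0: "K0 \<in> Th" and a_K0: "a \<in> K0" and b_K0: "b \<in> K0" and a_neq_b: "a \<noteq> b"
    and z_def: "z = midpoint a b" and z_Om: "z \<in> Om"
begin

lemma z_in_K0: "z \<in> convex hull K0"
  using midpoint_in_convex_hull_triangle[OF triangle[OF K0] a_K0 b_K0] z_def by simp

lemma z_mids_K0: "z \<in> mids K0"
  unfolding mids_def using a_K0 b_K0 a_neq_b z_def by blast

lemma z_int_mids: "z \<in> int_mids Th Om"
  unfolding int_mids_def all_mids_def using z_mids_K0 K0 z_Om by blast

lemma bary_coord_z:
  assumes "K \<in> Th" "z \<in> convex hull K"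
  shows "bary_coord K a z = 1/2" "bary_coord K b z = 1/2"
proof -
  have "bary_coord K p z = bary_coord K0 p z" for p
    using bary_coord_consistent[OF assms(1) K0 assms(2) z_in_K0] .
  moreover have "bary_coord K0 a z = 1/2" "bary_coord K0 b z = 1/2"
    unfolding z_def using bary_coord_midpoint[OF triangle[OF K0] a_K0 b_K0] a_neq_b by simp_all
  ultimately show "bary_coord K a z = 1/2" "bary_coord K b z = 1/2"
    by simp_all
qed

lemma edge_in_star:
  assumes "K \<in> Th" "z \<in> convex hull K"
  shows "a \<in> K" "b \<in> K"
  using bary_coord_z[OF assms] bary_coord_outside[of a K z] bary_coord_outside[of b K z] by auto

lemma point_beyond_edge:
  assumes K: "K \<in> Th" "K = {a, b, c}" "c \<noteq> a" "c \<noteq> b"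
  obtains p K' where "K' \<in> Th" "p \<in> convex hull K'" "z \<in> convex hull K'" "bary_coord K c p < 0"
proof -
  note tK = triangle[OF K(1)]
  have abc: "a \<in> K" "b \<in> K" "c \<in> K"
    using K(2) by auto
  obtain r where r: "r > 0" and star: "\<And>y. y \<in> ball z r \<Longrightarrow> \<exists>K\<in>Th. y \<in> convex hull K \<and> z \<in> convex hull K"
    using star_contains_ball[OF z_Om] by blast
  define t where "t = r / (2 * (norm (c - z) + 1))"
  have n: "norm (c - z) + 1 > 0"
    by (simp add: add_nonneg_pos)
  have t_pos: "t > 0"
    using r n by (simp add: t_def)
  have "t * norm (c - z) < t * (norm (c - z) + 1)"
    using t_pos by simp
  also have "\<dots> = r / 2"
    using n by (simp add: t_def field_simps)
  finally have t: "t > 0" "t * norm (c - z) < r"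
    using r t_pos by auto
  define p where "p = z + (-t) *\<^sub>R (c - z)"
  have "p \<in> ball z r"
    using t by (simp add: p_def dist_norm)
  moreover have "bary_coord K c z = 0"
    using bary_coord_midpoint[OF tK abc(1,2), of c] K(3,4) z_def by simp
  moreover have "bary_coord K c c = 1"
    using bary_coord_vertex[OF tK abc(3)] by simp
  ultimately show ?thesis
    using that star affine_fun_line[OF affine_fun_bary_coord[OF tK], of c z "-t" c] t
    unfolding p_def by fastforce
qed

lemma neighbour_across_edge:
  assumes K: "K \<in> Th" "K = {a, b, c}" "c \<noteq> a" "c \<noteq> b"
  obtains c' where "{a, b, c'} \<in> Th" "c' \<noteq> a" "c' \<noteq> b" "bary_coord K c c' < 0"
proof -
  note tK = triangle[OF K(1)]
  have abc: "a \<in> K" "b \<in> K" "c \<in> K"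
    using K(2) by auto
  obtain p K' where K': "K' \<in> Th" "p \<in> convex hull K'" "z \<in> convex hull K'"
    and p_neg: "bary_coord K c p < 0"
    using point_beyond_edge[OF K] .
  note tK' = triangle[OF K'(1)]
  obtain c' where c': "K' = {a, b, c'}" "c' \<noteq> a" "c' \<noteq> b"
    using triangle_third_vertex[OF tK' edge_in_star[OF K'(1,3)] a_neq_b] .
  have "bary_coord K c p = bary_coord K' c' p * bary_coord K c c'"
    using bary_coord_vertex[OF tK abc(1), of c] bary_coord_vertex[OF tK abc(2), of c] K(3,4)
    by (intro affine_fun_vanishing_on_edge[OF tK' c' a_neq_b affine_fun_bary_coord[OF tK]]) simp_all
  moreover have "bary_coord K' c' p \<ge> 0"
    using K'(2) c'(1) mem_convex_hull_triangle[OF tK'] by simp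
  ultimately have "bary_coord K c c' < 0"
    using p_neg by (simp add: mult_less_0_iff)
  moreover have "{a, b, c'} \<in> Th"
    using K'(1) unfolding c'(1) .
  ultimately show ?thesis
    using c'(2,3) that by blast
qed

lemma open_subset_Om: "open W \<Longrightarrow> W \<subseteq> (\<Union>K\<in>Th. convex hull K) \<Longrightarrow> W \<subseteq> Om"
  unfolding Om_eq by (rule interior_maximal)

lemma open_edge_in_Om:
  assumes K: "K \<in> Th" "K = {a, b, c}" "c \<noteq> a" "c \<noteq> b"
    and x: "bary_coord K a x > 0" "bary_coord K b x > 0" "bary_coord K c x = 0"
  shows "x \<in> Om"
proof -
  note tK = triangle[OF K(1)]
  obtain c' where K': "{a, b, c'} \<in> Th" "c' \<noteq> a" "c' \<noteq> b" and neg: "bary_coord K c c' < 0"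
    using neighbour_across_edge[OF K] .
  define K' where "K' = {a, b, c'}"
  note tK' = triangle[OF K'(1)[folded K'_def]]
  have rel: "bary_coord K c y = bary_coord K' c' y * bary_coord K c c'" for y
    using bary_coord_vertex[OF tK] K(2-4) K'(2,3) a_neq_b
    by (intro affine_fun_vanishing_on_edge[OF tK' K'_def K'(2,3) a_neq_b affine_fun_bary_coord[OF tK]])
      auto
  have "x \<in> convex hull {a, b}"
    using bary_coord_sum[OF tK, of x] x K(2-4) a_neq_b unfolding convex_hull_2 by force
  then have "x \<in> convex hull K'" "x \<in> convex hull K"
    unfolding K'_def K(2) by (meson hull_mono insert_mono subset_insertI subsetD)+
  then have x': "bary_coord K' a x > 0" "bary_coord K' b x > 0"
    using bary_coord_consistent[OF K'(1)[folded K'_def] K(1)] x by auto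
  let ?W = "{y. bary_coord K a y > 0} \<inter> {y. bary_coord K b y > 0}
    \<inter> {y. bary_coord K' a y > 0} \<inter> {y. bary_coord K' b y > 0}"
  have "open ?W"
    using tK tK' by (intro open_Int open_affine_fun_pos affine_fun_bary_coord)
  moreover have "?W \<subseteq> convex hull K \<union> convex hull K'"
    \<comment> \<open>by rel, lambda_c in K is a negative multiple of lambda_c' in K'\<close>
  proof
    fix y
    assume y: "y \<in> ?W"
    show "y \<in> convex hull K \<union> convex hull K'"
    proof (cases "bary_coord K c y \<ge> 0")
      case True
      then show ?thesis
        using y K(2) mem_convex_hull_triangle[OF tK] by auto
    next
      case False
      then have "bary_coord K' c' y > 0"
        using rel[of y] neg by (metis mult_nonpos_nonpos not_le not_less_iff_gr_or_eq)
      then show ?thesis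
        using y mem_convex_hull_triangle[OF tK'] unfolding K'_def by auto
    qed
  qed
  ultimately have "?W \<subseteq> Om"
    using K(1) K'(1) unfolding K'_def by (intro open_subset_Om) auto
  then show ?thesis
    using x x' by auto
qed

lemma edge_star_in_Om:
  assumes K: "K \<in> Th" "x \<in> convex hull K" "a \<in> K" "b \<in> K"
    and pos: "bary_coord K a x > 0" "bary_coord K b x > 0"
  shows "x \<in> Om"
proof -
  note tK = triangle[OF K(1)]
  obtain c where c: "K = {a, b, c}" "c \<noteq> a" "c \<noteq> b"
    using triangle_third_vertex[OF tK K(3,4) a_neq_b] .
  have "bary_coord K c x \<ge> 0"
    using K(2) c(1) mem_convex_hull_triangle[OF tK] by auto
  then consider "bary_coord K c x > 0" | "bary_coord K c x = 0"
    by linarith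
  then show ?thesis
  proof cases
    case 1
    then have "x \<in> interior (convex hull K)"
      using pos c(1) interior_convex_hull_triangle[OF tK] by auto
    then show ?thesis
      using open_subset_Om[of "interior (convex hull K)"] K(1) interior_subset by blast
  next
    case 2
    then show ?thesis
      using open_edge_in_Om[OF K(1) c pos] by blast
  qed
qed

definition bubble :: "pt \<Rightarrow> real" where
  "bubble x = 4 * hat a x * hat b x"

lemma bubble_eq: "K \<in> Th \<Longrightarrow> x \<in> convex hull K \<Longrightarrow> bubble x = 4 * bary_coord K a x * bary_coord K b x"
  unfolding bubble_def by (simp add: hat_eq)

lemma bubble_outside: "x \<notin> Om \<Longrightarrow> bubble x = 0"
proof (rule ccontr)
  assume x: "x \<notin> Om" and "bubble x \<noteq> 0"
  then have "hat a x \<noteq> 0"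
    unfolding bubble_def by auto
  then obtain K where K: "K \<in> Th" "x \<in> convex hull K"
    using hat_uncovered by blast
  note tK = triangle[OF K(1)]
  have "bary_coord K a x \<noteq> 0" "bary_coord K b x \<noteq> 0"
    using \<open>bubble x \<noteq> 0\<close> bubble_eq[OF K] by auto
  moreover from this have "a \<in> K" "b \<in> K"
    using bary_coord_outside by blast+
  moreover from this have "bary_coord K a x \<ge> 0" "bary_coord K b x \<ge> 0"
    using K(2) mem_convex_hull_triangle[OF tK] by blast+
  ultimately have "x \<in> Om"
    using edge_star_in_Om[OF K] by simp
  with x show False ..
qed

lemma is_P2_on_bubble: "K \<in> Th \<Longrightarrow> is_P2_on (convex hull K) bubble"
  using is_P2_on_cong[OF is_P2_on_affine_prod[OF affine_fun_bary_coord affine_fun_bary_coord]]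
    triangle bubble_eq by metis

lemma continuous_bubble: "continuous_on UNIV bubble"
proof -
  have "continuous_on (\<Union>K\<in>Th. convex hull K) bubble"
  proof (rule continuous_on_closed_Union[OF finite_Th closed_convex_hull])
    fix K
    assume K: "K \<in> Th"
    have "continuous_on (convex hull K) (\<lambda>x. 4 * bary_coord K a x * bary_coord K b x)"
      using affine_fun_bary_coord[OF triangle[OF K]]
      by (intro continuous_intros continuous_on_affine_fun)
    then show "continuous_on (convex hull K) bubble"
      by (rule continuous_on_eq) (simp add: bubble_eq[OF K])
  qed
  moreover have "continuous_on (- Om) bubble"
    by (rule continuous_on_eq[OF continuous_on_const[of _ 0]]) (simp add: bubble_outside)
  moreover have "UNIV = (\<Union>K\<in>Th. convex hull K) \<union> (- Om)"
    using Om_covered by blast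
  moreover have "closed (\<Union>K\<in>Th. convex hull K)"
    using finite_Th closed_convex_hull by (intro closed_UN) auto
  ultimately show ?thesis
    using open_Om by (metis closed_Compl continuous_on_closed_Un)
qed

lemma bubble_Vh: "bubble \<in> Vh Th Om"
  unfolding Vh_def using continuous_bubble bubble_outside is_P2_on_bubble by blast

lemma bubble_z: "bubble z = 1"
  using bubble_eq[OF K0 z_in_K0] bary_coord_z[OF K0 z_in_K0] by simp

lemma bubble_vertex: "y \<in> all_verts Th \<Longrightarrow> bubble y = 0"
proof -
  assume "y \<in> all_verts Th"
  then obtain K where K: "K \<in> Th" "y \<in> K"
    unfolding all_verts_def by blast
  then show ?thesis
    using bubble_eq[OF K(1) hull_inc[OF K(2)]] bary_coord_vertex[OF triangle[OF K(1)] K(2)] a_neq_b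
    by auto
qed

lemma bubble_other_mid: "y \<in> all_mids Th \<Longrightarrow> y \<noteq> z \<Longrightarrow> bubble y = 0"
proof -
  assume y: "y \<in> all_mids Th" "y \<noteq> z"
  then obtain K p q where K: "K \<in> Th" "p \<in> K" "q \<in> K" "y = midpoint p q"
    unfolding all_mids_def mids_def by blast
  have "{p, q} \<noteq> {a, b}"
    using y(2) K(4) z_def by (auto simp: doubleton_eq_iff midpoint_sym)
  then have "a \<notin> {p, q} \<or> b \<notin> {p, q}"
    using a_neq_b by auto
  then have "bary_coord K a y = 0 \<or> bary_coord K b y = 0"
    using bary_coord_midpoint[OF triangle[OF K(1)] K(2,3), of a]
      bary_coord_midpoint[OF triangle[OF K(1)] K(2,3), of b] K(4)
    by auto
  then show ?thesis
    using bubble_eq[OF K(1) midpoint_in_convex_hull_triangle[OF triangle[OF K(1)] K(2,3)]] K(4)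
    by auto
qed

lemma psi_eq_bubble: "psi Th Om z = bubble"
  unfolding psi_def
proof (rule the_equality)
  show "bubble \<in> Vh Th Om \<and> bubble z = 1 \<and> (\<forall>y\<in>all_verts Th \<union> all_mids Th. y \<noteq> z \<longrightarrow> bubble y = 0)"
    using bubble_Vh bubble_z bubble_vertex bubble_other_mid by blast
next
  fix p
  assume p: "p \<in> Vh Th Om \<and> p z = 1 \<and> (\<forall>y\<in>all_verts Th \<union> all_mids Th. y \<noteq> z \<longrightarrow> p y = 0)"
  show "p = bubble"
  proof (rule Vh_eqI)
    show "p \<in> Vh Th Om"
      using p by blast
    show "bubble \<in> Vh Th Om"
      by (rule bubble_Vh)
    fix y
    assume "y \<in> all_verts Th \<union> all_mids Th"
    then show "p y = bubble y"
      using p bubble_z bubble_vertex bubble_other_mid by (cases "y = z") auto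
  qed
qed

lemma differentiable_bubble:
  assumes "x \<in> Om" "x \<notin> skeleton"
  shows "bubble differentiable (at x)"
proof -
  obtain K where K: "K \<in> Th" "x \<in> convex hull K"
    using Om_covered[OF assms(1)] by blast
  have "(\<lambda>y. 4 * bary_coord K a y * bary_coord K b y) differentiable (at x)"
    using affine_fun_bary_coord[OF triangle[OF K(1)]]
    by (intro differentiable_mult differentiable_const differentiable_affine_fun)
  then obtain D where "((\<lambda>y. 4 * bary_coord K a y * bary_coord K b y) has_derivative D) (at x)"
    unfolding differentiable_def by blast
  then have "(bubble has_derivative D) (at x)"
    by (rule has_derivative_transform_within_open[OF _ open_interior interior_off_skeleton[OF K assms(2)]])
      (metis K(1) bubble_eq interior_subset subsetD)
  then show ?thesis
    unfolding differentiable_def by blast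
qed

text \<open>On a triangle with vertices a, b, c this is 1 - 2 lambda_c: the Crouzeix-Raviart basis
  function of z, equal to 1 at z and 0 at the other two edge midpoints.\<close>

definition cr_basis :: "pt set \<Rightarrow> pt \<Rightarrow> real" where
  "cr_basis K x = (if z \<in> mids K then 2 * bary_coord K a x + 2 * bary_coord K b x - 1 else 0)"

lemma z_mids_imp_edge: "K \<in> Th \<Longrightarrow> z \<in> mids K \<Longrightarrow> a \<in> K \<and> b \<in> K"
  using edge_in_star midpoint_in_convex_hull_triangle[OF triangle] unfolding mids_def by blast

lemma cr_basis_mid:
  assumes K: "K \<in> Th" and w: "w \<in> mids K"
  shows "cr_basis K w = (if w = z then 1 else 0)"
proof (cases "z \<in> mids K")
  case False
  then show ?thesis
    using w unfolding cr_basis_def by auto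
next
  case True
  note tK = triangle[OF K]
  have ab: "a \<in> K" "b \<in> K"
    using z_mids_imp_edge[OF K True] by auto
  obtain c where c: "K = {a, b, c}" "c \<noteq> a" "c \<noteq> b"
    using triangle_third_vertex[OF tK ab a_neq_b] .
  obtain p q where pq: "p \<in> K" "q \<in> K" "p \<noteq> q" "w = midpoint p q"
    using w unfolding mids_def by blast
  have val: "cr_basis K w = (if a = p then 1 else 0) + (if a = q then 1 else 0)
      + (if b = p then 1 else 0) + (if b = q then 1 else 0) - 1"
    using True bary_coord_midpoint[OF tK pq(1,2), of a] bary_coord_midpoint[OF tK pq(1,2), of b]
    unfolding cr_basis_def pq(4) by simp
  show ?thesis
  proof (cases "w = z")
    case True
    have "z \<in> convex hull K"
      using midpoint_in_convex_hull_triangle[OF tK ab] z_def by simp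
    then show ?thesis
      using bary_coord_z[OF K] True \<open>z \<in> mids K\<close> unfolding cr_basis_def by simp
  next
    case False
    then have "{p, q} \<noteq> {a, b}"
      using pq(4) z_def by (auto simp: doubleton_eq_iff midpoint_sym)
    then show ?thesis
      using val False pq(1-3) c a_neq_b by auto
  qed
qed

lemma cr_basis_Vnc: "cr_basis \<in> Vnc Th Om"
  unfolding Vnc_def
proof (intro CollectI conjI ballI allI impI)
  fix K
  assume K: "K \<in> Th"
  obtain wa \<beta>a wb \<beta>b where "\<And>x. bary_coord K a x = inner wa x + \<beta>a" "\<And>x. bary_coord K b x = inner wb x + \<beta>b"
    using affine_fun_bary_coord[OF triangle[OF K]] unfolding affine_fun_def by metis
  then have "cr_basis K x = inner (if z \<in> mids K then 2 *\<^sub>R (wa + wb) else 0) x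
      + (if z \<in> mids K then 2 * \<beta>a + 2 * \<beta>b - 1 else 0)" for x
    unfolding cr_basis_def by (simp add: inner_add_left algebra_simps)
  then show "\<exists>w \<beta>. \<forall>x\<in>convex hull K. cr_basis K x = inner w x + \<beta>"
    by blast
next
  fix K1 K2 y
  assume "K1 \<in> Th" "K2 \<in> Th" "y \<in> mids K1 \<and> y \<in> mids K2"
  then show "cr_basis K1 y = cr_basis K2 y"
    using cr_basis_mid by auto
next
  fix K y
  assume "K \<in> Th" "y \<in> mids K" "y \<notin> Om"
  then show "cr_basis K y = 0"
    using cr_basis_mid z_Om by auto
qed

lemma ncval_cr_basis: "w \<in> all_mids Th \<Longrightarrow> ncval Th cr_basis w = (if w = z then 1 else 0)"
  unfolding all_mids_def using ncval_eq[OF cr_basis_Vnc] cr_basis_mid by auto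

lemma Pi_h_cr_basis: "Pi_h Th Om cr_basis = bubble"
proof
  fix x
  have "Pi_h Th Om cr_basis x = (\<Sum>w\<in>int_mids Th Om. if w = z then psi Th Om w x else 0)"
    unfolding Pi_h_def by (intro sum.cong refl) (simp add: ncval_cr_basis int_mids_def)
  also have "\<dots> = psi Th Om z x"
    using finite_all_mids z_int_mids unfolding int_mids_def by simp
  finally show "Pi_h Th Om cr_basis x = bubble x"
    by (simp add: psi_eq_bubble)
qed

definition star_weight :: real where
  "star_weight = (\<Sum>K\<in>Th. if z \<in> mids K then measure lebesgue (convex hull K) / 3 else 0)"

lemma star_weight_pos: "star_weight > 0"
  unfolding star_weight_def
  using finite_Th K0 z_mids_K0 measure_triangle_pos[OF triangle[OF K0]] measure_triangle_pos triangle
  by (intro sum_pos2[of Th K0]) (auto intro: less_imp_le)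

lemma ip_h_cr_basis:
  assumes \<sigma>: "\<sigma> \<in> Vnc Th Om"
  shows "ip_h Th \<sigma> cr_basis = ncval Th \<sigma> z * star_weight"
proof -
  have "(\<Sum>w\<in>mids K. \<sigma> K w * cr_basis K w) = (if z \<in> mids K then ncval Th \<sigma> z else 0)"
    if K: "K \<in> Th" for K
  proof -
    have "(\<Sum>w\<in>mids K. \<sigma> K w * cr_basis K w) = (\<Sum>w\<in>mids K. if w = z then \<sigma> K w else 0)"
      using cr_basis_mid[OF K] by (intro sum.cong) auto
    also have "\<dots> = (if z \<in> mids K then \<sigma> K z else 0)"
      using finite_mids[OF K] by simp
    finally show ?thesis
      using ncval_eq[OF \<sigma> K] by simp
  qed
  then have "ip_h Th \<sigma> cr_basis
      = (\<Sum>K\<in>Th. measure lebesgue (convex hull K) / 3 * (if z \<in> mids K then ncval Th \<sigma> z else 0))"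
    unfolding ip_h_def by (intro sum.cong) auto
  also have "\<dots> = ncval Th \<sigma> z * star_weight"
    unfolding star_weight_def sum_distrib_left by (intro sum.cong) auto
  finally show ?thesis .
qed

text \<open>Testing the variational inequality with u + t bubble, which stays admissible as long as
  u z + t \<ge> chi z, because the bubble vanishes at every other node.\<close>

lemma variational_inequality_bubble:
  assumes u_K: "u \<in> Kh Th Om chi"
    and u_VI: "\<forall>v\<in>Kh Th Om chi. bilin_a Om u (\<lambda>x. v x - u x) \<ge> L2ip Om f (\<lambda>x. v x - u x)"
    and t: "u z + t \<ge> chi z"
  shows "t * bilin_a Om u bubble \<ge> t * L2ip Om f bubble"
proof -
  define v where "v x = u x + t * bubble x" for x
  have u_Vh: "u \<in> Vh Th Om"
    using u_K unfolding Kh_def by blast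
  have "v \<in> Vh Th Om"
    unfolding Vh_def
  proof (intro CollectI conjI allI impI ballI)
    show "continuous_on UNIV v"
      unfolding v_def using u_Vh continuous_bubble unfolding Vh_def by (intro continuous_intros) auto
  next
    fix x
    assume "x \<notin> Om"
    then show "v x = 0"
      unfolding v_def using u_Vh bubble_outside unfolding Vh_def by auto
  next
    fix K
    assume "K \<in> Th"
    then show "is_P2_on (convex hull K) v"
      unfolding v_def using u_Vh is_P2_on_bubble unfolding Vh_def by (intro is_P2_on_add_scaled) auto
  qed
  moreover have "v y \<ge> chi y" if "y \<in> all_mids Th" for y
    using that t u_K bubble_z bubble_other_mid unfolding v_def Kh_def by (cases "y = z") auto
  ultimately have "v \<in> Kh Th Om chi"
    unfolding Kh_def by blast
  then have "bilin_a Om u (\<lambda>x. t * bubble x) \<ge> L2ip Om f (\<lambda>x. t * bubble x)"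
    using u_VI unfolding v_def by auto
  then show ?thesis
    using bilin_a_cmult[OF negligible_skeleton differentiable_bubble] L2ip_cmult by metis
qed

lemma multiplier_sign:
  assumes u_K: "u \<in> Kh Th Om chi"
    and u_VI: "\<forall>v\<in>Kh Th Om chi. bilin_a Om u (\<lambda>x. v x - u x) \<ge> L2ip Om f (\<lambda>x. v x - u x)"
    and Vnc_\<sigma>: "\<sigma> \<in> Vnc Th Om"
    and \<sigma>_eq: "\<forall>v\<in>Vnc Th Om.
          ip_h Th \<sigma> v = L2ip Om f (Pi_h Th Om v) - bilin_a Om u (Pi_h Th Om v)"
  shows "ncval Th \<sigma> z \<le> 0 \<and> (u z > chi z \<longrightarrow> ncval Th \<sigma> z = 0)"
proof -
  have \<sigma>_z: "ncval Th \<sigma> z * star_weight = L2ip Om f bubble - bilin_a Om u bubble"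
    using \<sigma>_eq cr_basis_Vnc ip_h_cr_basis[OF Vnc_\<sigma>] Pi_h_cr_basis by metis
  have "u z \<ge> chi z"
    using u_K z_int_mids unfolding Kh_def int_mids_def by blast
  then have "1 * bilin_a Om u bubble \<ge> 1 * L2ip Om f bubble"
    by (intro variational_inequality_bubble[OF u_K u_VI]) simp
  then have "ncval Th \<sigma> z * star_weight \<le> 0"
    using \<sigma>_z by simp
  then have le: "ncval Th \<sigma> z \<le> 0"
    using star_weight_pos by (simp add: mult_le_0_iff)
  moreover have "ncval Th \<sigma> z = 0" if gt: "u z > chi z"
  proof -
    have "(chi z - u z) * bilin_a Om u bubble \<ge> (chi z - u z) * L2ip Om f bubble"
      by (intro variational_inequality_bubble[OF u_K u_VI]) simp
    then have "bilin_a Om u bubble \<le> L2ip Om f bubble"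
      using gt by (simp add: mult_le_cancel_left)
    then have "ncval Th \<sigma> z * star_weight \<ge> 0"
      using \<sigma>_z by simp
    then have "ncval Th \<sigma> z \<ge> 0"
      using star_weight_pos by (simp add: zero_le_mult_iff)
    with le show ?thesis
      by simp
  qed
  ultimately show ?thesis
    by blast
qed

end

theorem lemma3p2:
  fixes Th :: "pt set set" and Om :: "pt set"
    and f chi u :: "pt \<Rightarrow> real" and sigma :: "pt set \<Rightarrow> pt \<Rightarrow> real"
  assumes tri: "conforming_triangulation Th Om"
    and dom: "connected Om"
    and f: "in_L2 Om f"
    and chi_cont: "continuous_on (closure Om) chi"
    and chi_H1: "in_H1 Om chi"
    and chi_bd: "\<forall>x\<in>frontier Om. chi x \<le> 0"
    and u_K: "u \<in> Kh Th Om chi"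
    and u_VI: "\<forall>v\<in>Kh Th Om chi.
                 bilin_a Om u (\<lambda>x. v x - u x) \<ge> L2ip Om f (\<lambda>x. v x - u x)"
    and sigma_nc: "sigma \<in> Vnc Th Om"
    and sigma_def: "\<forall>v\<in>Vnc Th Om.
                 ip_h Th sigma v = L2ip Om f (Pi_h Th Om v) - bilin_a Om u (Pi_h Th Om v)"
  shows "\<forall>z\<in>int_mids Th Om. ncval Th sigma z \<le> 0 \<and>
                              (u z > chi z \<longrightarrow> ncval Th sigma z = 0)"
proof
  fix z
  assume "z \<in> int_mids Th Om"
  then obtain K0 a b where "K0 \<in> Th" "a \<in> K0" "b \<in> K0" "a \<noteq> b" "z = midpoint a b" "z \<in> Om"
    unfolding int_mids_def all_mids_def mids_def by blast
  then interpret interior_edge Th Om a b z K0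
    using tri by unfold_locales
  show "ncval Th sigma z \<le> 0 \<and> (u z > chi z \<longrightarrow> ncval Th sigma z = 0)"
    by (rule multiplier_sign[OF u_K u_VI sigma_nc sigma_def])
qed

end
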